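(* Let $A=[a_{ij}]\in M_{m,n}(\mathbb{R})$ have rank $r>1$ and be diagonally eliminable up to $r$, and let $k$ be an integer with $0\leq k<r$. Then $A^{(2k)}=[a^{(2k)}_{ij}]$ has as its first $k$ columns the first $k$ columns of the $m\times m$ identity matrix (i.e. $a^{(2k)}_{ij}=\delta_{ij}$ for $1\leq j\leq k$), and for $k+1\leq j\leq n$, $$a^{(2k)}_{ij}=\begin{cases}(-1)^{k+i}\dfrac{m^{1\dots k}_{1\dots i-1,\,i+1\dots k,\,j}}{m_k} & \text{if } 1\leq i\leq k,\\[2mm] \dfrac{m^{1\dots k\, i}_{1\dots k\, j}}{m_k} & \text{if } k+1\leq i\leq m.\end{cases}$$
   Context: Gauss-Jordan procedure: for $A\in M_{m,n}(\mathbb{R})$ set $A^{(0)}=A$. For $k\geq 0$, if $A^{(2k)}=[a^{(2k)}_{ij}]$ is defined and $a^{(2k)}_{k+1,k+1}\neq 0$, let $\mathcal{G}_{2k+1}$ be the $m\times m$ diagonal matrix with all diagonal entries $1$ except the $(k+1,k+1)$ entry, which is $1/a^{(2k)}_{k+1,k+1}$, and set $A^{(2k+1)}=\mathcal{G}_{2k+1}A^{(2k)}=[a^{(2k+1)}_{ij}]$; then let $\mathcal{G}_{2k+2}=[g_{ij}]_{m\times m}$ with $g_{ii}=1$, $g_{i,k+1}=-a^{(2k+1)}_{i,k+1}$ for $i\neq k+1$, and all other entries $0$, and set $A^{(2k+2)}=\mathcal{G}_{2k+2}A^{(2k+1)}$. A matrix $A$ of rank $r\geq 1$ is diagonally eliminable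 up to $r$ if for each $k=1,\dots,r$ the matrix $A^{(2k-2)}$ is defined and $a^{(2k-2)}_{kk}\neq 0$. Minors: for $1\leq i_1<\dots<i_p\leq m$, $1\leq j_1<\dots<j_p\leq n$, $m^{i_1\dots i_p}_{j_1\dots j_p}$ is the determinant of the submatrix of $A$ with rows $i_1,\dots,i_p$ and columns $j_1,\dots,j_p$; thus $m^{1\dots k}_{1\dots i-1,\,i+1\dots k,\,j}$ uses rows $1,\dots,k$ and columns $1,\dots,k$ with $i$ removed and $j$ appended, and $m^{1\dots k\,i}_{1\dots k\,j}$ uses rows $1,\dots,k,i$ and columns $1,\dots,k,j$. $m_k=m^{1\dots k}_{1\dots k}$ and $m_0=1$. *)

theory Defs
  imports "Jordan_Normal_Form.DL_Rank" "Jordan_Normal_Form.DL_Submatrix"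
begin

text \<open>Gauss-Jordan procedure. Indices are 0-based: the paper's pivot position (k+1,k+1)
  is (k,k) here.\<close>

definition GJ_scale :: "real mat \<Rightarrow> nat \<Rightarrow> real mat" where
  "GJ_scale B k = mat (dim_row B) (dim_row B)
     (\<lambda>(i,j). if i = j then (if i = k then 1 / (B $$ (k,k)) else 1) else 0)"

definition GJ_elim :: "real mat \<Rightarrow> nat \<Rightarrow> real mat" where
  "GJ_elim B k = mat (dim_row B) (dim_row B)
     (\<lambda>(i,j). if i = j then 1 else if j = k then - (B $$ (i,k)) else 0)"

text \<open>GJ A t is the paper's A^(t):  A^(2k+1) = G_{2k+1} A^(2k),  A^(2k+2) = G_{2k+2} A^(2k+1).\<close>
fun GJ :: "real mat \<Rightarrow> nat \<Rightarrow> real mat" where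
  "GJ A 0 = A"
| "GJ A (Suc t) = (if even t then GJ_scale (GJ A t) (t div 2) * GJ A t
                   else GJ_elim (GJ A t) (t div 2) * GJ A t)"

text \<open>Diagonally eliminable up to r (paper's 1-based a^(2k-2)_{kk} is entry (k-1,k-1)).
  Definedness of A^(2k-2) follows from nonzero earlier pivots.\<close>
definition diag_eliminable :: "real mat \<Rightarrow> nat \<Rightarrow> bool" where
  "diag_eliminable A r \<longleftrightarrow> (\<forall>k\<in>{1..r}. GJ A (2*k - 2) $$ (k - 1, k - 1) \<noteq> 0)"

definition minor :: "real mat \<Rightarrow> nat set \<Rightarrow> nat set \<Rightarrow> real" where
  "minor A I J = det (submatrix A I J)"

end

theory Submission
  imports Defs
begin

text \<open>Each Gauss-Jordan step multiplies on the left by a matrix whose columns other than the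
  pivot column are unit vectors. Hence A^(2k) = L A, where the columns k+1, ..., m of L are unit
  vectors, and, the pivots being nonzero, so are the first k columns of A^(2k). As the rows
  1, ..., k, i of L vanish outside the columns 1, ..., k, i, the minors of L A on these rows are
  the principal minor of L on them times the corresponding minor of A. On rows and columns
  1, ..., k this gives det L_k * m_k = 1. For the two minors of the statement, Laplace expansion
  along the last column and the unit columns of A^(2k) turn the left-hand side into a^(2k)_ij,
  resp. +-a^(2k)_ij.\<close>


section \<open>Unit columns and determinants\<close>

lemma mult_mat_vec_unit_vec:
  fixes X :: "'a :: semiring_1 mat"
  assumes "X \<in> carrier_mat n m" and "s < m"
  shows "X *\<^sub>v unit_vec m s = col X s"
  by (rule eq_vecI) (use assms in \<open>auto simp: row_def col_def\<close>)

lemma col_mult_unit_vec: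
  fixes X Y :: "'a :: semiring_1 mat"
  assumes "X \<in> carrier_mat m m" and "Y \<in> carrier_mat m m" and "s < m"
    and "col X s = unit_vec m s" and "col Y s = unit_vec m s"
  shows "col (X * Y) s = unit_vec m s"
proof -
  have "col (X * Y) s = X *\<^sub>v col Y s"
    using assms(1-3) by (rule col_mult2)
  also have "\<dots> = col X s"
    unfolding assms(5) using assms(1,3) by (rule mult_mat_vec_unit_vec)
  finally show ?thesis
    using assms(4) by simp
qed

lemma det_zero_row:
  fixes N :: "'a :: comm_ring_1 mat"
  assumes "N \<in> carrier_mat n n" and "i < n" and "\<And>j. j < n \<Longrightarrow> N $$ (i, j) = 0"
  shows "det N = 0"
  using laplace_expansion_row[OF assms(1,2)] assms(3) by simp

lemma det_last_col_unit:
  fixes N :: "'a :: comm_ring_1 mat"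
  assumes N: "N \<in> carrier_mat (Suc l) (Suc l)"
    and "\<And>a. a < l \<Longrightarrow> N $$ (a, l) = 0" and "N $$ (l, l) = 1"
  shows "det N = det (mat_delete N l l)"
proof -
  have "det N = (\<Sum>a<Suc l. N $$ (a, l) * cofactor N a l)"
    by (rule laplace_expansion_column[OF N]) simp
  also have "\<dots> = cofactor N l l"
    using assms(2,3) by simp
  finally show ?thesis
    by (simp add: cofactor_def)
qed

lemma det_insert_index_unit_cols:
  fixes N :: "'a :: comm_ring_1 mat"
  assumes N: "N \<in> carrier_mat (Suc l) (Suc l)" and i: "i \<le> l"
    and cols: "\<And>a b. a \<le> l \<Longrightarrow> b < l \<Longrightarrow>
      N $$ (a, b) = (if a = insert_index i b then 1 else 0)"
  shows "det N = (-1) ^ (i + l) * N $$ (i, l)"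
proof -
  have D: "mat_delete N a l \<in> carrier_mat l l" for a
    using mat_delete_carrier[OF N] by simp
  have minor_zero: "det (mat_delete N a l) = 0" if a: "a \<le> l" "a \<noteq> i" for a
  proof (rule det_zero_row[OF D])
    show "delete_index a i < l"
      using a i by (auto simp: delete_index_def)
    fix b assume b: "b < l"
    have "mat_delete N a l $$ (delete_index a i, b) = N $$ (i, b)"
      using N a i b by (auto simp: mat_delete_def delete_index_def)
    also have "\<dots> = 0"
      using cols[OF i b] by (simp add: insert_index_def)
    finally show "mat_delete N a l $$ (delete_index a i, b) = 0" .
  qed
  have minor_one: "mat_delete N i l = 1\<^sub>m l"
    by (rule eq_matI) (use N i cols in \<open>auto simp: mat_delete_def insert_index_def\<close>)
  have "det N = (\<Sum>a<Suc l. N $$ (a, l) * cofactor N a l)"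
    by (rule laplace_expansion_column[OF N]) simp
  also have "\<dots> = (\<Sum>a<Suc l. if a = i then (-1) ^ (i + l) * N $$ (i, l) else 0)"
    by (rule sum.cong) (auto simp: cofactor_def minor_zero minor_one)
  also have "\<dots> = (-1) ^ (i + l) * N $$ (i, l)"
    using i by simp
  finally show ?thesis .
qed


section \<open>Submatrices along strictly increasing index maps\<close>

lemma strict_mono_on_insert_index: "strict_mono_on S (insert_index i)"
  by (auto simp: strict_mono_on_def insert_index_def)

lemma image_insert_index:
  assumes "i \<le> l"
  shows "insert_index i ` {..<l} = {..<Suc l} - {i}"
proof
  show "insert_index i ` {..<l} \<subseteq> {..<Suc l} - {i}"
    by (auto simp: insert_index_def)
  show "{..<Suc l} - {i} \<subseteq> insert_index i ` {..<l}"
  proof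
    fix x assume x: "x \<in> {..<Suc l} - {i}"
    then have "x = insert_index i (delete_index i x)"
      by (simp add: insert_delete_index)
    moreover have "delete_index i x < l"
      using x assms by (auto simp: delete_index_def)
    ultimately show "x \<in> insert_index i ` {..<l}"
      by blast
  qed
qed

definition snoc_index :: "nat \<Rightarrow> (nat \<Rightarrow> nat) \<Rightarrow> nat \<Rightarrow> nat \<Rightarrow> nat" where
  "snoc_index l h x a = (if a < l then h a else x)"

lemma image_snoc_index: "snoc_index l h x ` {..<Suc l} = h ` {..<l} \<union> {x}"
proof -
  have "snoc_index l h x ` {..<l} = h ` {..<l}"
    by (rule image_cong) (auto simp: snoc_index_def)
  moreover have "snoc_index l h x l = x"
    by (simp add: snoc_index_def)
  ultimately show ?thesis
    by (simp add: lessThan_Suc)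
qed

lemma strict_mono_on_snoc_index:
  assumes "strict_mono_on {..<l} h" and "\<And>a. a < l \<Longrightarrow> h a < x"
  shows "strict_mono_on {..<Suc l} (snoc_index l h x)"
  using assms by (auto simp: strict_mono_on_def snoc_index_def)

lemma pick_strict_mono_image:
  fixes f :: "nat \<Rightarrow> nat"
  assumes f: "strict_mono_on {..<p} f" and a: "a < p"
  shows "pick (f ` {..<p}) a = f a"
proof -
  have "{x \<in> f ` {..<p}. x < f a} = f ` {..<a}"
    using a strict_mono_on_less[OF f] by force
  moreover have "inj_on f {..<a}"
    by (rule inj_on_subset[OF strict_mono_on_imp_inj_on[OF f]]) (use a in auto)
  ultimately have "card {x \<in> f ` {..<p}. x < f a} = a"
    by (simp add: card_image)
  then show ?thesis
    using pick_card_in_set[of "f a" "f ` {..<p}"] a by simp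
qed

definition reindex_mat ::
  "'a mat \<Rightarrow> (nat \<Rightarrow> nat) \<Rightarrow> (nat \<Rightarrow> nat) \<Rightarrow> nat \<Rightarrow> nat \<Rightarrow> 'a mat" where
  "reindex_mat X f g p q = mat p q (\<lambda>(a, b). X $$ (f a, g b))"

lemma reindex_mat_dim [simp]:
  "dim_row (reindex_mat X f g p q) = p" "dim_col (reindex_mat X f g p q) = q"
  by (simp_all add: reindex_mat_def)

lemma reindex_mat_carrier: "reindex_mat X f g p q \<in> carrier_mat p q"
  by (simp add: reindex_mat_def)

lemma reindex_mat_index [simp]:
  "a < p \<Longrightarrow> b < q \<Longrightarrow> reindex_mat X f g p q $$ (a, b) = X $$ (f a, g b)"
  by (simp add: reindex_mat_def)

lemma submatrix_strict_mono_image: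
  assumes X: "X \<in> carrier_mat m n"
    and f: "strict_mono_on {..<p} f" "f ` {..<p} \<subseteq> {..<m}"
    and g: "strict_mono_on {..<q} g" "g ` {..<q} \<subseteq> {..<n}"
  shows "submatrix X (f ` {..<p}) (g ` {..<q}) = reindex_mat X f g p q"
proof -
  have "{i. i < dim_row X \<and> i \<in> f ` {..<p}} = f ` {..<p}"
    "{j. j < dim_col X \<and> j \<in> g ` {..<q}} = g ` {..<q}"
    using X f(2) g(2) by auto
  then have "card {i. i < dim_row X \<and> i \<in> f ` {..<p}} = p"
    "card {j. j < dim_col X \<and> j \<in> g ` {..<q}} = q"
    using card_image[OF strict_mono_on_imp_inj_on[OF f(1)]]
      card_image[OF strict_mono_on_imp_inj_on[OF g(1)]] by simp_all
  then show ?thesis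
    unfolding submatrix_def reindex_mat_def
    by (intro eq_matI) (auto simp: pick_strict_mono_image f g)
qed

lemma reindex_mat_mult:
  fixes L A :: "'a :: comm_semiring_0 mat"
  assumes L: "L \<in> carrier_mat m m" and A: "A \<in> carrier_mat m n"
    and f: "inj_on f {..<p}" "f ` {..<p} \<subseteq> {..<m}" and g: "g ` {..<q} \<subseteq> {..<n}"
    and L_zero: "\<And>a s. a < p \<Longrightarrow> s < m \<Longrightarrow> s \<notin> f ` {..<p} \<Longrightarrow> L $$ (f a, s) = 0"
  shows "reindex_mat (L * A) f g p q = reindex_mat L f f p p * reindex_mat A f g p q"
proof (rule eq_matI)
  fix a b assume "a < dim_row (reindex_mat L f f p p * reindex_mat A f g p q)"
    and "b < dim_col (reindex_mat L f f p p * reindex_mat A f g p q)"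
  then have a: "a < p" and b: "b < q"
    by auto
  have "f a < m" "g b < n"
    using a b f(2) g by auto
  then have "reindex_mat (L * A) f g p q $$ (a, b) = (\<Sum>s<m. L $$ (f a, s) * A $$ (s, g b))"
    using a b L A by (simp add: scalar_prod_def atLeast0LessThan)
  also have "\<dots> = (\<Sum>s\<in>f ` {..<p}. L $$ (f a, s) * A $$ (s, g b))"
    by (rule sum.mono_neutral_right) (use f(2) L_zero a in auto)
  also have "\<dots> = (\<Sum>t<p. L $$ (f a, f t) * A $$ (f t, g b))"
    by (simp add: sum.reindex[OF f(1)])
  also have "\<dots> = (reindex_mat L f f p p * reindex_mat A f g p q) $$ (a, b)"
    using a b by (simp add: scalar_prod_def atLeast0LessThan)
  finally show "reindex_mat (L * A) f g p q $$ (a, b)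
    = (reindex_mat L f f p p * reindex_mat A f g p q) $$ (a, b)" .
qed auto


section \<open>The Gauss-Jordan steps\<close>

lemma GJ_scale_carrier: "B \<in> carrier_mat m n \<Longrightarrow> GJ_scale B k \<in> carrier_mat m m"
  by (simp add: GJ_scale_def)

lemma GJ_elim_carrier: "B \<in> carrier_mat m n \<Longrightarrow> GJ_elim B k \<in> carrier_mat m m"
  by (simp add: GJ_elim_def)

lemma GJ_carrier: "A \<in> carrier_mat m n \<Longrightarrow> GJ A t \<in> carrier_mat m n"
  by (induction t) (auto intro!: mult_carrier_mat GJ_scale_carrier GJ_elim_carrier)

lemma GJ_even_Suc:
  "GJ A (2 * Suc k) = GJ_elim (GJ_scale (GJ A (2 * k)) k * GJ A (2 * k)) k
     * (GJ_scale (GJ A (2 * k)) k * GJ A (2 * k))"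
  using GJ.simps(2)[of A "Suc (2 * k)"] by simp

lemma GJ_scale_mult_index:
  assumes "B \<in> carrier_mat m n" and "i < m" and "j < n"
  shows "(GJ_scale B k * B) $$ (i, j)
    = (if i = k then B $$ (i, j) / B $$ (k, k) else B $$ (i, j))"
proof -
  have "(GJ_scale B k * B) $$ (i, j)
      = (\<Sum>l<m. (if i = l then (if i = k then 1 / B $$ (k, k) else 1) else 0) * B $$ (l, j))"
    using assms by (simp add: GJ_scale_def scalar_prod_def atLeast0LessThan)
  then show ?thesis
    using assms(2) by (simp add: if_distrib[of "\<lambda>c. c * _"] cong: if_cong)
qed

lemma GJ_elim_mult_index:
  assumes "B \<in> carrier_mat m n" and "k < m" and "i < m" and "j < n"
  shows "(GJ_elim B k * B) $$ (i, j)
    = (if i = k then B $$ (i, j) else B $$ (i, j) - B $$ (i, k) * B $$ (k, j))"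
proof -
  have "(GJ_elim B k * B) $$ (i, j)
      = (\<Sum>l<m. (if i = l then 1 else if l = k then - B $$ (i, k) else 0) * B $$ (l, j))"
    using assms by (simp add: GJ_elim_def scalar_prod_def atLeast0LessThan)
  also have "\<dots> = (\<Sum>l<m. (if i = l then B $$ (l, j) else 0)
      + (if l = k \<and> i \<noteq> k then - B $$ (i, k) * B $$ (l, j) else 0))"
    by (rule sum.cong) auto
  finally show ?thesis
    using assms by (simp add: sum.distrib)
qed

lemma GJ_even_Suc_index:
  assumes A: "A \<in> carrier_mat m n" and "k < m" and "k < n" and "i < m" and "j < n"
  defines "B \<equiv> GJ A (2 * k)"
  shows "GJ A (2 * Suc k) $$ (i, j) = (if i = k then B $$ (k, j) / B $$ (k, k)
    else B $$ (i, j) - B $$ (i, k) * (B $$ (k, j) / B $$ (k, k)))"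
proof -
  have B: "B \<in> carrier_mat m n"
    unfolding B_def by (rule GJ_carrier[OF A])
  have SB: "GJ_scale B k * B \<in> carrier_mat m n"
    by (rule mult_carrier_mat[OF GJ_scale_carrier[OF B] B])
  show ?thesis
    unfolding GJ_even_Suc B_def[symmetric] GJ_elim_mult_index[OF SB assms(2,4,5)]
    using GJ_scale_mult_index[OF B, of _ _ k] assms by auto
qed

lemma GJ_even_unit_cols:
  assumes A: "A \<in> carrier_mat m n" and "k \<le> m" and "k \<le> n"
    and pivots: "\<And>t. t < k \<Longrightarrow> GJ A (2 * t) $$ (t, t) \<noteq> 0"
    and "i < m" and "j < k"
  shows "GJ A (2 * k) $$ (i, j) = (if i = j then 1 else 0)"
  using assms(2-)
proof (induction k arbitrary: i j)
  case (Suc k)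
  then have "k < m" "k < n" "j < n"
    by auto
  note step = GJ_even_Suc_index[OF A this(1,2) \<open>i < m\<close> this(3)]
  have IH: "GJ A (2 * k) $$ (i', j') = (if i' = j' then 1 else 0)" if "i' < m" "j' < k" for i' j'
    using Suc that by auto
  have pivot: "GJ A (2 * k) $$ (k, k) \<noteq> 0"
    using Suc.prems by auto
  show ?case
  proof (cases "j < k")
    case True
    then show ?thesis
      unfolding step using IH \<open>k < m\<close> \<open>i < m\<close> by auto
  next
    case False
    then have "j = k"
      using \<open>j < Suc k\<close> by simp
    then show ?thesis
      unfolding step using pivot by auto
  qed
qed simp

lemma col_GJ_scale:
  "s < dim_row B \<Longrightarrow> s \<noteq> k \<Longrightarrow> col (GJ_scale B k) s = unit_vec (dim_row B) s"
  by (rule eq_vecI) (auto simp: GJ_scale_def)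

lemma col_GJ_elim:
  "s < dim_row B \<Longrightarrow> s \<noteq> k \<Longrightarrow> col (GJ_elim B k) s = unit_vec (dim_row B) s"
  by (rule eq_vecI) (auto simp: GJ_elim_def)

lemma GJ_even_left_factor:
  assumes A: "A \<in> carrier_mat m n"
  shows "\<exists>L \<in> carrier_mat m m. (\<forall>s. k \<le> s \<longrightarrow> s < m \<longrightarrow> col L s = unit_vec m s)
    \<and> GJ A (2 * k) = L * A"
proof (induction k)
  case 0
  show ?case
    using A by (intro bexI[of _ "1\<^sub>m m"]) auto
next
  case (Suc k)
  then obtain L where L: "L \<in> carrier_mat m m"
    and L_col: "\<And>s. k \<le> s \<Longrightarrow> s < m \<Longrightarrow> col L s = unit_vec m s"
    and GJ_eq: "GJ A (2 * k) = L * A"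
    by blast
  define S where "S = GJ_scale (GJ A (2 * k)) k"
  define E where "E = GJ_elim (S * GJ A (2 * k)) k"
  have B: "GJ A (2 * k) \<in> carrier_mat m n"
    using GJ_carrier[OF A] .
  have S: "S \<in> carrier_mat m m"
    unfolding S_def by (rule GJ_scale_carrier[OF B])
  have E: "E \<in> carrier_mat m m"
    unfolding E_def by (rule GJ_elim_carrier[OF mult_carrier_mat[OF S B]])
  have "GJ A (2 * Suc k) = E * (S * (L * A))"
    by (simp add: GJ_even_Suc S_def E_def GJ_eq)
  also have "\<dots> = (E * S * L) * A"
    using E S L A by (simp add: assoc_mult_mat[of _ m m _ m _ n])
  finally have "GJ A (2 * Suc k) = (E * S * L) * A" .
  moreover have "col (E * S * L) s = unit_vec m s" if "Suc k \<le> s" "s < m" for s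
  proof -
    have "col S s = unit_vec m s" "col E s = unit_vec m s"
      using col_GJ_scale col_GJ_elim B S that unfolding S_def E_def by auto
    then show ?thesis
      using col_mult_unit_vec E S L L_col that by (meson Suc_leD mult_carrier_mat)
  qed
  moreover have "E * S * L \<in> carrier_mat m m"
    using E S L by simp
  ultimately show ?case
    by blast
qed

lemma diag_eliminable_pivot:
  assumes "diag_eliminable A r" and "t < r"
  shows "GJ A (2 * t) $$ (t, t) \<noteq> 0"
proof -
  have "Suc t \<in> {1..r}"
    using assms(2) by simp
  then have "GJ A (2 * Suc t - 2) $$ (Suc t - 1, Suc t - 1) \<noteq> 0"
    using assms(1) unfolding diag_eliminable_def by blast
  then show ?thesis
    by simp
qed

lemma (in vec_space) rank_le_nr:
  assumes A: "A \<in> carrier_mat n nc"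
  shows "rank A \<le> n"
proof -
  obtain S where S: "maximal S (\<lambda>T. T \<subseteq> set (cols A) \<and> lin_indpt T)"
    using maximal_exists[of "\<lambda>T. T \<subseteq> set (cols A) \<and> lin_indpt T" "card (set (cols A))" "{}"]
    by (meson List.finite_set card_mono empty_iff empty_subsetI finite_lin_indpt2 rev_finite_subset)
  then have "S \<subseteq> carrier_vec n" and "lin_indpt S"
    using cols_dim A unfolding maximal_def by blast+
  then have "card S \<le> dim"
    using li_le_dim(2)[OF fin_dim] by simp
  then show ?thesis
    using rank_card_indpt[OF A S] dim_is_n by simp
qed


section \<open>Minors of a left multiple with unit columns\<close>

locale unit_col_factorization =
  fixes A L :: "real mat" and m n k :: nat
  assumes A: "A \<in> carrier_mat m n" and L: "L \<in> carrier_mat m m"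
    and k_le: "k \<le> m" "k \<le> n"
    and L_unit_col: "\<And>s. k \<le> s \<Longrightarrow> s < m \<Longrightarrow> col L s = unit_vec m s"
    and LA_unit_col:
      "\<And>i j. i < m \<Longrightarrow> j < k \<Longrightarrow> (L * A) $$ (i, j) = (if i = j then 1 else 0)"
begin

lemma L_index_unit_col:
  "r < m \<Longrightarrow> k \<le> s \<Longrightarrow> s < m \<Longrightarrow> L $$ (r, s) = (if r = s then 1 else 0)"
  using arg_cong[OF L_unit_col, of s "\<lambda>v. v $ r"] L by simp

lemma det_reindex_mult:
  assumes f: "strict_mono_on {..<p} f" "f ` {..<p} \<subseteq> {..<m}" "{..<k} \<subseteq> f ` {..<p}"
    and g: "strict_mono_on {..<p} g" "g ` {..<p} \<subseteq> {..<n}"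
  shows "det (reindex_mat (L * A) f g p p)
    = det (reindex_mat L f f p p) * minor A (f ` {..<p}) (g ` {..<p})"
proof -
  have "reindex_mat (L * A) f g p p = reindex_mat L f f p p * reindex_mat A f g p p"
  proof (rule reindex_mat_mult[OF L A strict_mono_on_imp_inj_on[OF f(1)] f(2) g(2)])
    fix a s assume a: "a < p" and s: "s < m" "s \<notin> f ` {..<p}"
    have "k \<le> s"
      using s(2) f(3) by (meson lessThan_iff not_le subsetD)
    moreover have "f a \<noteq> s" "f a < m"
      using a s(2) f(2) by auto
    ultimately show "L $$ (f a, s) = 0"
      using L_index_unit_col s(1) by simp
  qed
  then show ?thesis
    unfolding minor_def submatrix_strict_mono_image[OF A f(1,2) g]
    by (simp add: det_mult[OF reindex_mat_carrier reindex_mat_carrier])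
qed

lemma det_leading_block_eq_inverse_minor:
  "det (reindex_mat L id id k k) = 1 / minor A {0..<k} {0..<k}"
proof -
  have "reindex_mat (L * A) id id k k = 1\<^sub>m k"
    by (rule eq_matI) (use LA_unit_col k_le in auto)
  moreover have "det (reindex_mat (L * A) id id k k)
      = det (reindex_mat L id id k k) * minor A (id ` {..<k}) (id ` {..<k})"
    by (rule det_reindex_mult) (use k_le in \<open>auto simp: strict_mono_on_def\<close>)
  ultimately have "det (reindex_mat L id id k k) * minor A {0..<k} {0..<k} = 1"
    by (simp add: atLeast0LessThan)
  then show ?thesis
    by (metis eq_divide_eq mult_zero_right zero_neq_one)
qed

lemma lower_entry_eq_minor_ratio:
  assumes i: "k \<le> i" "i < m" and j: "k \<le> j" "j < n"
  shows "(L * A) $$ (i, j)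
    = minor A ({0..<k} \<union> {i}) ({0..<k} \<union> {j}) / minor A {0..<k} {0..<k}"
proof -
  let ?r = "snoc_index k id i" and ?c = "snoc_index k id j"
  have r: "strict_mono_on {..<Suc k} ?r"
    using i by (intro strict_mono_on_snoc_index) (auto simp: strict_mono_on_def)
  have c: "strict_mono_on {..<Suc k} ?c"
    using j by (intro strict_mono_on_snoc_index) (auto simp: strict_mono_on_def)
  have "det (reindex_mat (L * A) ?r ?c (Suc k) (Suc k))
      = (-1) ^ (k + k) * reindex_mat (L * A) ?r ?c (Suc k) (Suc k) $$ (k, k)"
  proof (rule det_insert_index_unit_cols)
    fix a b assume "a \<le> k" "b < k"
    then show "reindex_mat (L * A) ?r ?c (Suc k) (Suc k) $$ (a, b)
      = (if a = insert_index k b then 1 else 0)"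
      using i by (auto simp: snoc_index_def LA_unit_col)
  qed auto
  then have "det (reindex_mat (L * A) ?r ?c (Suc k) (Suc k)) = (L * A) $$ (i, j)"
    by (simp add: snoc_index_def)
  moreover have "det (reindex_mat L ?r ?r (Suc k) (Suc k)) = det (reindex_mat L id id k k)"
  proof -
    have "det (reindex_mat L ?r ?r (Suc k) (Suc k))
        = det (mat_delete (reindex_mat L ?r ?r (Suc k) (Suc k)) k k)"
      by (rule det_last_col_unit) (use i L_index_unit_col in \<open>auto simp: snoc_index_def\<close>)
    also have "mat_delete (reindex_mat L ?r ?r (Suc k) (Suc k)) k k = reindex_mat L id id k k"
      by (rule eq_matI) (auto simp: mat_delete_def snoc_index_def)
    finally show ?thesis .
  qed
  moreover have "?r ` {..<Suc k} = {0..<k} \<union> {i}" "?c ` {..<Suc k} = {0..<k} \<union> {j}"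
    by (simp_all add: image_snoc_index atLeast0LessThan)
  ultimately have "(L * A) $$ (i, j)
      = det (reindex_mat L id id k k) * minor A ({0..<k} \<union> {i}) ({0..<k} \<union> {j})"
    using det_reindex_mult[OF r _ _ c] i j by (auto simp: atLeast0LessThan)
  then show ?thesis
    by (simp add: det_leading_block_eq_inverse_minor)
qed

lemma upper_entry_eq_minor_ratio:
  assumes i: "i < k" and j: "k \<le> j" "j < n"
  shows "(L * A) $$ (i, j)
    = (-1) ^ (k + i + 1) * minor A {0..<k} (({0..<k} - {i}) \<union> {j}) / minor A {0..<k} {0..<k}"
proof -
  obtain l where l: "k = Suc l"
    using i by (cases k) auto
  let ?c = "snoc_index l (insert_index i) j"
  have c: "strict_mono_on {..<k} ?c"
    unfolding l
  proof (rule strict_mono_on_snoc_index)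
    show "strict_mono_on {..<l} (insert_index i)"
      by (rule strict_mono_on_insert_index)
    show "insert_index i a < j" if "a < l" for a
      using that j l by (simp add: insert_index_def)
  qed
  have c_image: "?c ` {..<k} = ({0..<k} - {i}) \<union> {j}"
    using i by (simp add: l image_snoc_index image_insert_index atLeast0LessThan)
  have "det (reindex_mat (L * A) id ?c k k)
      = (-1) ^ (i + l) * reindex_mat (L * A) id ?c k k $$ (i, l)"
    unfolding l
  proof (rule det_insert_index_unit_cols)
    fix a b assume "a \<le> l" "b < l"
    then show "reindex_mat (L * A) id ?c (Suc l) (Suc l) $$ (a, b)
      = (if a = insert_index i b then 1 else 0)"
      using l k_le LA_unit_col by (auto simp: snoc_index_def insert_index_def)
  qed (use i l in auto)
  also have "\<dots> = (-1) ^ (i + l) * (L * A) $$ (i, j)"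
    using i l by (simp add: snoc_index_def)
  also have "(-1) ^ (i + l) = ((-1) ^ (k + i + 1) :: real)"
    using l by (simp add: power_add)
  finally have "det (reindex_mat (L * A) id ?c k k) = (-1) ^ (k + i + 1) * (L * A) $$ (i, j)" .
  moreover have "det (reindex_mat (L * A) id ?c k k)
      = det (reindex_mat L id id k k) * minor A (id ` {..<k}) (?c ` {..<k})"
    by (rule det_reindex_mult[OF _ _ _ c])
      (use c_image j k_le in \<open>auto simp: strict_mono_on_def\<close>)
  ultimately have "(-1) ^ (k + i + 1) * (L * A) $$ (i, j)
      = minor A {0..<k} (({0..<k} - {i}) \<union> {j}) / minor A {0..<k} {0..<k}"
    by (simp add: c_image atLeast0LessThan det_leading_block_eq_inverse_minor)
  then have "(-1) ^ (k + i + 1) * ((-1) ^ (k + i + 1) * (L * A) $$ (i, j))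
      = (-1) ^ (k + i + 1)
        * (minor A {0..<k} (({0..<k} - {i}) \<union> {j}) / minor A {0..<k} {0..<k})"
    by (rule arg_cong)
  then show ?thesis
    by simp
qed

end

theorem theorem2p6:
  fixes A :: "real mat" and m n r k :: nat
  assumes "A \<in> carrier_mat m n"
    and "vec_space.rank m A = r"
    and "r > 1"
    and "diag_eliminable A r"
    and "k < r"
  shows "(\<forall>i<m. \<forall>j<k. GJ A (2*k) $$ (i,j) = (if i = j then 1 else 0))
    \<and> (\<forall>j. k \<le> j \<and> j < n \<longrightarrow>
         (\<forall>i<k. GJ A (2*k) $$ (i,j) =
             (-1) ^ (k + i + 1) * minor A {0..<k} (({0..<k} - {i}) \<union> {j})
               / minor A {0..<k} {0..<k})
       \<and> (\<forall>i. k \<le> i \<and> i < m \<longrightarrow> GJ A (2*k) $$ (i,j) =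
             minor A ({0..<k} \<union> {i}) ({0..<k} \<union> {j}) / minor A {0..<k} {0..<k}))"
proof -
  have "k < m" "k < n"
    using vec_space.rank_le_nr[OF assms(1)] vec_space.rank_le_nc[OF assms(1)] assms(2,5) by auto
  obtain L where L: "L \<in> carrier_mat m m"
      "\<forall>s. k \<le> s \<longrightarrow> s < m \<longrightarrow> col L s = unit_vec m s"
    and GJ_eq: "GJ A (2 * k) = L * A"
    using GJ_even_left_factor[OF assms(1)] by blast
  have unit_cols: "GJ A (2 * k) $$ (i, j) = (if i = j then 1 else 0)" if "i < m" "j < k" for i j
    using GJ_even_unit_cols[OF assms(1)] diag_eliminable_pivot[OF assms(4)] assms(5)
      \<open>k < m\<close> \<open>k < n\<close> that by simp
  have "unit_col_factorization A L m n k"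
    using assms(1) L \<open>k < m\<close> \<open>k < n\<close> unit_cols unfolding GJ_eq by unfold_locales auto
  then show ?thesis
    using unit_cols unit_col_factorization.upper_entry_eq_minor_ratio
      unit_col_factorization.lower_entry_eq_minor_ratio
    unfolding GJ_eq by blast
qed

end
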